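(* Let $m\ge1$, $r\ge0$ be integers and $S_m(r)=S_m(r,r)$. Then $$\mathrm{vol}(S_m^{\rm cube}(r))=\sum_{j=0}^{\min\{m,r\}}\binom mj\binom rj\binom{r+m-j}{m-j},\qquad \mathrm{vol}(S_m^{\rm conv}(r))=\frac{r^m}{m!}\binom{2m}{m},$$ and for every fixed $m\ge1$, $\lim_{r\to\infty}\mathrm{vol}(S^{\rm conv}_m(r))/\mathrm{vol}(S^{\rm cube}_m(r))=1$.
   Context: $S_m(r^+,r^-)=\{\mathbf x\in\mathbb Z^m:\sum_{i:x_i>0}x_i\le r^+,\ \sum_{i:x_i<0}|x_i|\le r^-\}$; $S_m(r,r)$ is the ball of radius $r$ around $\mathbf 0$ in $(\mathbb Z^m,d_a)$, where $d_a(\mathbf x,\mathbf y)=\max\{\sum_{i:x_i>y_i}(x_i-y_i),\sum_{i:x_i<y_i}(y_i-x_i)\}$. For $S\subset\mathbb Z^m$, $S^{\rm cube}=\bigcup_{\mathbf y\in S}(\mathbf y+[-1/2,1/2]^m)\subset\mathbb R^m$ and $S^{\rm conv}$ is the convex hull of $S$ in $\mathbb R^m$; vol is Lebesgue measure. *)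

theory Defs
  imports "HOL-Analysis.Analysis"
begin

text \<open>Lattice points of Z^m are represented as vectors in real^'n (m = CARD('n))
  all of whose coordinates are integers.\<close>

definition S_set :: "real \<Rightarrow> real \<Rightarrow> (real^'n) set" where
  "S_set rp rm = {x. (\<forall>i. x $ i \<in> \<int>) \<and>
      (\<Sum>i\<in>{i. x $ i > 0}. x $ i) \<le> rp \<and>
      (\<Sum>i\<in>{i. x $ i < 0}. \<bar>x $ i\<bar>) \<le> rm}"

definition S_ball :: "nat \<Rightarrow> (real^'n) set" where
  "S_ball r = S_set (real r) (real r)"

definition cube_set :: "(real^'n) set \<Rightarrow> (real^'n) set" where
  "cube_set S = (\<Union>y\<in>S. cbox (y - (\<chi> i. 1/2)) (y + (\<chi> i. 1/2)))"

definition conv_set :: "(real^'n) set \<Rightarrow> (real^'n) set" where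
  "conv_set S = convex hull S"

end

theory Submission
  imports Defs
begin

(* Sorting the coordinates of a lattice point of S_m(a,b) by sign, with J the set of positive
   coordinates, its positive part is a composition of at most a into |J| positive parts and its
   negative part a weak composition of at most b into m - |J| parts; this counts S_m(a,b), and the
   unit cubes around distinct lattice points overlap only in null sets, so the count is the cube
   volume. The convex hull of S_m(a,b) is the body {x. sum x_i^+ <= a, sum x_i^- <= b}, the
   Minkowski sum of a and -b times the standard simplex, so for a = b = r its volume is r^m V.
   V is found without integration: the cubes around S_m(r) lie between the bodies of radii
   r - m/2 and r + m/2, hence |S_m(r)| / r^m tends to V, while the counting formula makes it tend
   to sum_j C(m,j) / (j! (m-j)!) = C(2m,m) / m!. *)

section \<open>Lattice points in simplices\<close>

definition nat_simplex :: "'a set \<Rightarrow> nat \<Rightarrow> ('a \<Rightarrow> nat) set" where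
  "nat_simplex K b = {v. (\<forall>i. i \<notin> K \<longrightarrow> v i = 0) \<and> sum v K \<le> b}"

definition pos_nat_simplex :: "'a set \<Rightarrow> nat \<Rightarrow> ('a \<Rightarrow> nat) set" where
  "pos_nat_simplex J a = {u. (\<forall>i. i \<notin> J \<longrightarrow> u i = 0) \<and> (\<forall>i\<in>J. 1 \<le> u i) \<and> sum u J \<le> a}"

lemma hockey_stick_choose: "(\<Sum>s\<le>b. (s + k) choose k) = (b + k + 1) choose (k + 1)"
  by (induction b) auto

lemma nat_simplex_insert:
  assumes "finite K" "i \<notin> K"
  shows "nat_simplex (insert i K) b = (\<Union>t\<le>b. (\<lambda>v. v(i := t)) ` nat_simplex K (b - t))"
proof (intro equalityI subsetI)
  fix v assume v: "v \<in> nat_simplex (insert i K) b"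
  have "sum (v(i := 0)) K = sum v K"
    using assms by (intro sum.cong) auto
  moreover have "sum v (insert i K) = v i + sum v K"
    using assms v by (simp add: nat_simplex_def)
  ultimately have "v(i := 0) \<in> nat_simplex K (b - v i)" "v i \<le> b"
    using v by (auto simp: nat_simplex_def)
  moreover have "v = (v(i := 0))(i := v i)" by simp
  ultimately show "v \<in> (\<Union>t\<le>b. (\<lambda>v. v(i := t)) ` nat_simplex K (b - t))"
    by blast
next
  fix v assume "v \<in> (\<Union>t\<le>b. (\<lambda>v. v(i := t)) ` nat_simplex K (b - t))"
  then obtain t w where "t \<le> b" "w \<in> nat_simplex K (b - t)" "v = w(i := t)" by auto
  moreover have "sum (w(i := t)) K = sum w K"
    using assms by (intro sum.cong) auto
  ultimately show "v \<in> nat_simplex (insert i K) b"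
    using assms by (auto simp: nat_simplex_def)
qed

lemma finite_and_card_nat_simplex:
  assumes "finite K"
  shows "finite (nat_simplex K b) \<and> card (nat_simplex K b) = (b + card K) choose card K"
  using assms
proof (induction K arbitrary: b rule: finite_induct)
  case empty
  have "nat_simplex {} b = {\<lambda>_. 0}" by (auto simp: nat_simplex_def)
  then show ?case unfolding \<open>nat_simplex {} b = {\<lambda>_. 0}\<close> by simp
next
  case (insert i K)
  have inj: "inj_on (\<lambda>v. v(i := t)) (nat_simplex K c)" for t c
  proof (intro inj_onI ext)
    fix v w x assume "v \<in> nat_simplex K c" "w \<in> nat_simplex K c" "v(i := t) = w(i := t)"
    then show "v x = w x"
      using insert.hyps by (cases "x = i") (auto simp: nat_simplex_def dest: fun_cong[of _ _ x])
  qed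
  have disj: "(\<lambda>v. v(i := s)) ` nat_simplex K (b - s) \<inter> (\<lambda>v. v(i := t)) ` nat_simplex K (b - t) = {}"
    if "s \<noteq> t" for s t
    using that by (auto dest: fun_cong[of _ _ i])
  have "card (nat_simplex (insert i K) b) = (\<Sum>t\<le>b. card ((\<lambda>v. v(i := t)) ` nat_simplex K (b - t)))"
    unfolding nat_simplex_insert[OF insert.hyps]
    using insert.IH disj by (intro card_UN_disjoint) auto
  also have "\<dots> = (\<Sum>t\<le>b. (b - t + card K) choose card K)"
    using insert.IH by (simp add: card_image[OF inj])
  also have "\<dots> = (\<Sum>s\<le>b. (s + card K) choose card K)"
    using sum.atLeastAtMost_rev[of "\<lambda>s. (s + card K) choose card K" 0 b] by (simp add: atMost_atLeast0)
  finally show ?case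
    using insert.hyps insert.IH by (simp add: nat_simplex_insert hockey_stick_choose)
qed

lemma pos_nat_simplex_eq_image:
  assumes "finite J" "card J \<le> a"
  shows "pos_nat_simplex J a = (\<lambda>v i. if i \<in> J then Suc (v i) else 0) ` nat_simplex J (a - card J)"
proof (intro equalityI subsetI)
  fix u assume u: "u \<in> pos_nat_simplex J a"
  define v where "v i = u i - 1" for i
  have "sum v J = sum u J - card J"
    using u unfolding v_def by (subst sum_subtractf_nat) (auto simp: pos_nat_simplex_def)
  then have "v \<in> nat_simplex J (a - card J)"
    using u by (auto simp: nat_simplex_def pos_nat_simplex_def v_def)
  moreover have "u = (\<lambda>i. if i \<in> J then Suc (v i) else 0)"
    using u by (auto simp: pos_nat_simplex_def fun_eq_iff v_def)
  ultimately show "u \<in> (\<lambda>v i. if i \<in> J then Suc (v i) else 0) ` nat_simplex J (a - card J)"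
    by blast
next
  fix u assume "u \<in> (\<lambda>v i. if i \<in> J then Suc (v i) else 0) ` nat_simplex J (a - card J)"
  then obtain v where v: "v \<in> nat_simplex J (a - card J)" and u: "u = (\<lambda>i. if i \<in> J then Suc (v i) else 0)"
    by blast
  have "sum u J = sum v J + card J"
    unfolding u by (simp add: sum_Suc)
  then show "u \<in> pos_nat_simplex J a"
    using v assms unfolding u by (auto simp: nat_simplex_def pos_nat_simplex_def)
qed

lemma finite_and_card_pos_nat_simplex:
  assumes "finite J"
  shows "finite (pos_nat_simplex J a) \<and> card (pos_nat_simplex J a) = a choose card J"
proof (cases "card J \<le> a")
  case True
  have "inj_on (\<lambda>v i. if i \<in> J then Suc (v i) else 0) (nat_simplex J (a - card J))"
  proof (intro inj_onI ext)
    fix v w x assume "v \<in> nat_simplex J (a - card J)" "w \<in> nat_simplex J (a - card J)"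
      and "(\<lambda>i. if i \<in> J then Suc (v i) else 0) = (\<lambda>i. if i \<in> J then Suc (w i) else 0)"
    then show "v x = w x"
      by (cases "x \<in> J") (auto simp: nat_simplex_def dest: fun_cong[of _ _ x])
  qed
  then show ?thesis
    using True assms finite_and_card_nat_simplex[OF assms, of "a - card J"]
    by (simp add: pos_nat_simplex_eq_image[OF assms True] card_image)
next
  case False
  have "card J \<le> sum u J" if "\<forall>i\<in>J. 1 \<le> u i" for u :: "_ \<Rightarrow> nat"
    using sum_mono[of J "\<lambda>_. 1" u] that by simp
  then have "pos_nat_simplex J a = {}"
    using False by (force simp: pos_nat_simplex_def)
  then show ?thesis
    using False by simp
qed

lemma sum_Pow_by_card:
  fixes f :: "nat \<Rightarrow> 'b::comm_semiring_1"
  assumes "finite A"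
  shows "(\<Sum>J\<in>Pow A. f (card J)) = (\<Sum>j\<le>card A. of_nat (card A choose j) * f j)"
proof -
  have "(\<Sum>J\<in>Pow A. f (card J)) = (\<Sum>j\<le>card A. \<Sum>J\<in>{J\<in>Pow A. card J = j}. f (card J))"
    using assms by (intro sum.group[symmetric]) (auto simp: card_mono)
  also have "\<dots> = (\<Sum>j\<le>card A. of_nat (card A choose j) * f j)"
    using n_subsets[OF assms] by (intro sum.cong) auto
  finally show ?thesis .
qed

section \<open>Counting the lattice points of \<open>S_set\<close>\<close>

definition pos_mass :: "real^'n \<Rightarrow> real" where
  "pos_mass x = (\<Sum>i\<in>UNIV. max (x$i) 0)"

definition asym_ball :: "real \<Rightarrow> real \<Rightarrow> (real^'n) set" where
  "asym_ball a b = {x. pos_mass x \<le> a \<and> pos_mass (- x) \<le> b}"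

lemma sum_pos_coords_eq_pos_mass: "(\<Sum>i\<in>{i. x$i > 0}. x$i) = pos_mass x"
  unfolding pos_mass_def by (subst sum.inter_restrict[of UNIV, simplified]) (auto intro: sum.cong)

lemma sum_neg_coords_eq_pos_mass_uminus: "(\<Sum>i\<in>{i. x$i < 0}. \<bar>x$i\<bar>) = pos_mass (- x)"
proof -
  have "(\<Sum>i\<in>{i. x$i < 0}. \<bar>x$i\<bar>) = (\<Sum>i\<in>{i. (- x)$i > 0}. (- x)$i)"
    by (intro sum.cong) auto
  then show ?thesis
    by (simp only: sum_pos_coords_eq_pos_mass)
qed

lemma S_set_eq_lattice_points_asym_ball: "S_set a b = {x. \<forall>i. x$i \<in> \<int>} \<inter> asym_ball a b"
  unfolding S_set_def asym_ball_def sum_pos_coords_eq_pos_mass sum_neg_coords_eq_pos_mass_uminus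
  by blast

definition glue_signs :: "'n set \<Rightarrow> ('n \<Rightarrow> nat) \<times> ('n \<Rightarrow> nat) \<Rightarrow> real^'n" where
  "glue_signs J = (\<lambda>(u, v). \<chi> i. if i \<in> J then real (u i) else - real (v i))"

lemma pos_mass_glue_signs:
  assumes "\<forall>i. i \<notin> J \<longrightarrow> u i = 0" "\<forall>i\<in>J. v i = 0"
  shows "pos_mass (glue_signs J (u, v)) = real (sum u J)"
    and "pos_mass (- glue_signs J (u, v)) = real (sum v (- J))"
proof -
  have "pos_mass (glue_signs J (u, v)) = (\<Sum>i\<in>UNIV. if i \<in> J then real (u i) else 0)"
    unfolding pos_mass_def glue_signs_def by (intro sum.cong) auto
  also have "\<dots> = real (sum u J)"
    by (simp add: sum.inter_restrict[symmetric])
  finally show "pos_mass (glue_signs J (u, v)) = real (sum u J)" .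
  have "pos_mass (- glue_signs J (u, v)) = (\<Sum>i\<in>UNIV. if i \<in> - J then real (v i) else 0)"
    unfolding pos_mass_def glue_signs_def using assms by (intro sum.cong) auto
  also have "\<dots> = real (sum v (- J))"
    using sum.inter_restrict[of UNIV "\<lambda>i. real (v i)" "- J"] by simp
  finally show "pos_mass (- glue_signs J (u, v)) = real (sum v (- J))" .
qed

lemma S_set_eq_Union_glue_signs:
  "S_set (real a) (real b) = (\<Union>J. glue_signs J ` (pos_nat_simplex J a \<times> nat_simplex (- J) b))"
proof (intro equalityI subsetI)
  fix x :: "real^'n" assume x: "x \<in> S_set (real a) (real b)"
  then have int: "x$i \<in> \<int>" for i
    by (simp add: S_set_def)
  define J where "J = {i. x$i > 0}"
  define u where "u i = nat \<lfloor>x$i\<rfloor>" for i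
  define v where "v i = nat \<lfloor>- x$i\<rfloor>" for i
  have u_supp: "\<forall>i. i \<notin> J \<longrightarrow> u i = 0" and v_supp: "\<forall>i\<in>J. v i = 0"
    by (auto simp: J_def u_def v_def)
  have glue: "glue_signs J (u, v) = x"
    using int by (auto simp: glue_signs_def vec_eq_iff J_def u_def v_def)
  have "real (sum u J) \<le> real a" "real (sum v (- J)) \<le> real b"
    using x glue pos_mass_glue_signs[OF u_supp v_supp]
    by (auto simp: S_set_eq_lattice_points_asym_ball asym_ball_def simp del: of_nat_sum)
  then have "sum u J \<le> a" "sum v (- J) \<le> b"
    by (simp_all only: of_nat_le_iff)
  moreover have "1 \<le> u i" if "i \<in> J" for i
    using that int[of i] by (auto simp: J_def u_def elim!: Ints_cases)
  ultimately have "(u, v) \<in> pos_nat_simplex J a \<times> nat_simplex (- J) b"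
    using u_supp v_supp by (auto simp: pos_nat_simplex_def nat_simplex_def)
  then show "x \<in> (\<Union>J. glue_signs J ` (pos_nat_simplex J a \<times> nat_simplex (- J) b))"
    using glue by blast
next
  fix x :: "real^'n" assume "x \<in> (\<Union>J. glue_signs J ` (pos_nat_simplex J a \<times> nat_simplex (- J) b))"
  then obtain J u v where uv: "u \<in> pos_nat_simplex J a" "v \<in> nat_simplex (- J) b"
    and x: "x = glue_signs J (u, v)" by auto
  then have "\<forall>i. i \<notin> J \<longrightarrow> u i = 0" "\<forall>i\<in>J. v i = 0"
    by (auto simp: pos_nat_simplex_def nat_simplex_def)
  from pos_mass_glue_signs[OF this] uv show "x \<in> S_set (real a) (real b)"
    unfolding x S_set_eq_lattice_points_asym_ball
    by (auto simp: asym_ball_def glue_signs_def pos_nat_simplex_def nat_simplex_def simp del: of_nat_sum)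
qed

lemma pos_coords_glue_signs:
  assumes "x \<in> glue_signs J ` (pos_nat_simplex J a \<times> nat_simplex (- J) b)"
  shows "{i. x $ i > 0} = J"
  using assms by (auto simp: glue_signs_def pos_nat_simplex_def nat_simplex_def split: if_splits)

lemma inj_on_glue_signs: "inj_on (glue_signs J) (pos_nat_simplex J a \<times> nat_simplex (- J) b)"
proof (rule inj_onI, clarify)
  fix u v u' v'
  assume "u \<in> pos_nat_simplex J a" "v \<in> nat_simplex (- J) b"
    and "u' \<in> pos_nat_simplex J a" "v' \<in> nat_simplex (- J) b"
    and glue: "glue_signs J (u, v) = glue_signs J (u', v')"
  moreover have "(if i \<in> J then real (u i) else - real (v i)) = (if i \<in> J then real (u' i) else - real (v' i))" for i
    using arg_cong[OF glue, of "\<lambda>x. x $ i"] by (simp add: glue_signs_def)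
  ultimately have "u i = u' i \<and> v i = v' i" for i
    by (cases "i \<in> J") (auto simp: pos_nat_simplex_def nat_simplex_def dest: meta_spec[of _ i])
  then show "u = u' \<and> v = v'"
    by auto
qed

lemma finite_and_card_S_set:
  "finite (S_set (real a) (real b) :: (real^'n) set) \<and>
   card (S_set (real a) (real b) :: (real^'n) set) =
     (\<Sum>j\<le>CARD('n). (CARD('n) choose j) * (a choose j) * ((b + (CARD('n) - j)) choose (CARD('n) - j)))"
proof -
  let ?A = "\<lambda>J::'n set. glue_signs J ` (pos_nat_simplex J a \<times> nat_simplex (- J) b)"
  have card_Compl: "card (- J) = CARD('n) - card J" for J :: "'n set"
    by (simp add: Compl_eq_Diff_UNIV card_Diff_subset)
  have A: "finite (?A J) \<and> card (?A J) = (a choose card J) * ((b + (CARD('n) - card J)) choose (CARD('n) - card J))" for J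
    using finite_and_card_pos_nat_simplex[of J a] finite_and_card_nat_simplex[of "- J" b]
    by (simp add: card_image[OF inj_on_glue_signs] card_cartesian_product card_Compl)
  have disj: "?A J \<inter> ?A K = {}" if "J \<noteq> K" for J K
    using that pos_coords_glue_signs by (metis disjoint_iff)
  have "card (S_set (real a) (real b) :: (real^'n) set) = (\<Sum>J\<in>UNIV. card (?A J))"
    unfolding S_set_eq_Union_glue_signs using A disj by (intro card_UN_disjoint) auto
  also have "\<dots> = (\<Sum>J\<in>Pow (UNIV :: 'n set). (a choose card J) * ((b + (CARD('n) - card J)) choose (CARD('n) - card J)))"
    using A by simp
  also have "\<dots> = (\<Sum>j\<le>CARD('n). (CARD('n) choose j) * (a choose j) * ((b + (CARD('n) - j)) choose (CARD('n) - j)))"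
    by (subst sum_Pow_by_card) (simp_all add: mult.assoc)
  finally show ?thesis
    unfolding S_set_eq_Union_glue_signs using A by simp
qed

section \<open>Unit cubes around lattice points\<close>

definition unit_cube :: "real^'n \<Rightarrow> (real^'n) set" where
  "unit_cube y = cbox (y - (\<chi> i. 1/2)) (y + (\<chi> i. 1/2))"

lemma cube_set_eq_Union_unit_cube: "cube_set S = \<Union>(unit_cube ` S)"
  by (simp add: cube_set_def unit_cube_def)

lemma mem_unit_cube: "x \<in> unit_cube y \<longleftrightarrow> (\<forall>i. \<bar>x$i - y$i\<bar> \<le> 1/2)"
  unfolding unit_cube_def mem_box_cart abs_diff_le_iff by auto

lemma measure_unit_cube: "measure lebesgue (unit_cube y) = 1"
proof -
  have "y \<in> unit_cube y"
    by (simp add: mem_unit_cube)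
  then show ?thesis
    unfolding unit_cube_def using content_cbox_cart[of "y - (\<chi> i. 1/2)" "y + (\<chi> i. 1/2)"] by auto
qed

lemma negligible_Int_unit_cube:
  fixes y z :: "real^'n"
  assumes "\<forall>i. y$i \<in> \<int>" "\<forall>i. z$i \<in> \<int>" "y \<noteq> z"
  shows "negligible (unit_cube y \<inter> unit_cube z)"
proof -
  obtain k where "y$k \<noteq> z$k"
    using assms(3) by (auto simp: vec_eq_iff)
  then have "1 \<le> \<bar>y$k - z$k\<bar>"
    using assms by (intro Ints_nonzero_abs_ge1) auto
  then have "unit_cube y \<inter> unit_cube z \<subseteq> {x. x \<bullet> axis k 1 = (y$k + z$k) / 2}"
    by (auto simp: mem_unit_cube inner_axis abs_if dest!: spec[of _ k] split: if_splits)
  moreover have "negligible {x :: real^'n. x \<bullet> axis k 1 = (y$k + z$k) / 2}"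
    by (rule negligible_standard_hyperplane) simp
  ultimately show ?thesis
    using negligible_subset by blast
qed

lemma
  assumes "finite S" "\<forall>y\<in>S. \<forall>i. y$i \<in> \<int>"
  shows lmeasurable_cube_set: "cube_set S \<in> lmeasurable"
    and measure_cube_set: "measure lebesgue (cube_set S) = card S"
proof -
  show "cube_set S \<in> lmeasurable"
    unfolding cube_set_eq_Union_unit_cube unit_cube_def using assms(1) by (intro fmeasurable.finite_UN) auto
  have "pairwise (\<lambda>y z. negligible (unit_cube y \<inter> unit_cube z)) S"
    unfolding pairwise_def using assms(2) negligible_Int_unit_cube by blast
  then have "measure lebesgue (cube_set S) = (\<Sum>y\<in>S. measure lebesgue (unit_cube y))"
    unfolding cube_set_eq_Union_unit_cube using assms(1)
    by (intro measure_negligible_finite_Union_image) (auto simp: unit_cube_def)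
  then show "measure lebesgue (cube_set S) = card S"
    by (simp add: measure_unit_cube)
qed

section \<open>The convex body \<open>asym_ball\<close>\<close>

lemma max_coord_le_pos_mass: "max (x$k) 0 \<le> pos_mass x"
  unfolding pos_mass_def by (rule member_le_sum) auto

lemma pos_mass_scaleR: "0 \<le> t \<Longrightarrow> pos_mass (t *\<^sub>R x) = t * pos_mass x"
  by (simp add: pos_mass_def max_mult_distrib_left sum_distrib_left)

lemma pos_mass_convex_comb:
  assumes "0 \<le> u" "0 \<le> v"
  shows "pos_mass (u *\<^sub>R x + v *\<^sub>R y) \<le> u * pos_mass x + v * pos_mass y"
proof -
  have "max (u * a + v * b) 0 \<le> u * max a 0 + v * max b 0" for a b :: real
    using assms by (smt (verit) mult_left_mono mult_nonneg_nonneg max.cobounded1 max.cobounded2)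
  then show ?thesis
    unfolding pos_mass_def by (simp add: sum_distrib_left sum.distrib[symmetric] sum_mono)
qed

lemma pos_mass_le_of_coords_close:
  fixes x y :: "real^'n" and c :: real
  assumes "\<forall>i. \<bar>y$i - x$i\<bar> \<le> c"
  shows "pos_mass y \<le> pos_mass x + CARD('n) * c"
proof -
  have "max (y$i) 0 \<le> max (x$i) 0 + c" for i
    using assms[rule_format, of i] by linarith
  then have "pos_mass y \<le> (\<Sum>i\<in>UNIV. max (x$i) 0 + c)"
    unfolding pos_mass_def by (intro sum_mono) auto
  then show ?thesis
    by (simp add: pos_mass_def sum.distrib)
qed

lemma asym_ball_of_coords_close:
  fixes x y :: "real^'n" and a b c :: real
  assumes "x \<in> asym_ball a b" "\<forall>i. \<bar>y$i - x$i\<bar> \<le> c"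
  shows "y \<in> asym_ball (a + CARD('n) * c) (b + CARD('n) * c)"
proof -
  have "\<forall>i. \<bar>(- y)$i - (- x)$i\<bar> \<le> c"
    using assms(2) by (simp add: abs_minus_commute)
  then show ?thesis
    using assms pos_mass_le_of_coords_close[of y x c] pos_mass_le_of_coords_close[of "- y" "- x" c]
    by (auto simp: asym_ball_def)
qed

lemma convex_asym_ball: "convex (asym_ball a b)"
proof (rule convexI)
  fix x y :: "real^'n" and u v :: real
  assume xy: "x \<in> asym_ball a b" "y \<in> asym_ball a b" and uv: "0 \<le> u" "0 \<le> v" "u + v = 1"
  have "pos_mass (u *\<^sub>R x' + v *\<^sub>R y') \<le> c" if "pos_mass x' \<le> c" "pos_mass y' \<le> c" for x' y' :: "real^'n" and c
  proof -
    have "pos_mass (u *\<^sub>R x' + v *\<^sub>R y') \<le> u * pos_mass x' + v * pos_mass y'"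
      using pos_mass_convex_comb[OF uv(1,2)] .
    also have "\<dots> \<le> u * c + v * c"
      using that uv by (intro add_mono mult_left_mono) auto
    finally show ?thesis
      using uv(3) by (simp add: distrib_right[symmetric])
  qed
  from this[of x a y] this[of "- x" b "- y"] show "u *\<^sub>R x + v *\<^sub>R y \<in> asym_ball a b"
    using xy by (simp add: asym_ball_def)
qed

lemma asym_ball_subset_cbox: "asym_ball a b \<subseteq> cbox (\<chi> k. - b) (\<chi> k. a)"
proof
  fix x :: "real^'n" assume x: "x \<in> asym_ball a b"
  have "- b \<le> x$k \<and> x$k \<le> a" for k
    using x max_coord_le_pos_mass[of x k] max_coord_le_pos_mass[of "- x" k] by (auto simp: asym_ball_def)
  then show "x \<in> cbox (\<chi> k. - b) (\<chi> k. a)"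
    by (simp add: mem_box_cart)
qed

lemma lmeasurable_asym_ball: "asym_ball a b \<in> lmeasurable"
  using convex_asym_ball bounded_subset[OF bounded_cbox asym_ball_subset_cbox]
  by (rule measurable_convex)

lemma asym_ball_scaleR:
  assumes "0 \<le> t" "0 \<le> a" "0 \<le> b"
  shows "asym_ball (t * a) (t * b) = (*\<^sub>R) t ` asym_ball a b"
proof (cases "t = 0")
  case True
  have "asym_ball 0 0 \<subseteq> {0 :: real^'n}"
    using asym_ball_subset_cbox[of 0 0] by (auto simp: vec_eq_iff mem_box_cart)
  moreover have zero: "0 \<in> asym_ball a' b'" if "0 \<le> a'" "0 \<le> b'" for a' b'
    using that by (simp add: asym_ball_def pos_mass_def)
  ultimately have "asym_ball 0 0 = {0 :: real^'n}"
    by blast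
  then show ?thesis
    using True zero[OF assms(2,3)] by auto
next
  case False
  have "x \<in> (*\<^sub>R) t ` asym_ball a b" if "x \<in> asym_ball (t * a) (t * b)" for x :: "real^'n"
  proof
    show "x = t *\<^sub>R (inverse t *\<^sub>R x)"
      using False by simp
    have "inverse t * pos_mass x \<le> a" "inverse t * pos_mass (- x) \<le> b"
      using that assms False by (auto simp: asym_ball_def field_simps)
    then show "inverse t *\<^sub>R x \<in> asym_ball a b"
      using pos_mass_scaleR[of "inverse t" x] pos_mass_scaleR[of "inverse t" "- x"] assms(1)
      by (simp add: asym_ball_def)
  qed
  moreover have "t *\<^sub>R x \<in> asym_ball (t * a) (t * b)" if "x \<in> asym_ball a b" for x :: "real^'n"
    using that assms pos_mass_scaleR[of t x] pos_mass_scaleR[of t "- x"]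
    by (simp add: asym_ball_def mult_left_mono)
  ultimately show ?thesis
    by blast
qed

lemma measure_asym_ball_scale:
  assumes "0 \<le> t"
  shows "measure lebesgue (asym_ball t t :: (real^'n) set) = t ^ CARD('n) * measure lebesgue (asym_ball 1 1 :: (real^'n) set)"
proof -
  have "asym_ball t t = (*\<^sub>R) t ` (asym_ball 1 1 :: (real^'n) set)"
    using asym_ball_scaleR[of t 1 1] assms by simp
  then show ?thesis
    using assms measure_lebesgue_affine[of t 0 "asym_ball 1 1 :: (real^'n) set"] by simp
qed

lemma cube_set_S_set_subset_asym_ball:
  "cube_set (S_set a b) \<subseteq> (asym_ball (a + CARD('n) / 2) (b + CARD('n) / 2) :: (real^'n) set)"
proof
  fix x :: "real^'n" assume "x \<in> cube_set (S_set a b)"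
  then obtain y where "y \<in> asym_ball a b" "\<forall>i. \<bar>x$i - y$i\<bar> \<le> 1/2"
    by (auto simp: cube_set_eq_Union_unit_cube mem_unit_cube S_set_eq_lattice_points_asym_ball)
  from asym_ball_of_coords_close[OF this] show "x \<in> asym_ball (a + CARD('n) / 2) (b + CARD('n) / 2)"
    by simp
qed

lemma asym_ball_subset_cube_set_S_set:
  "(asym_ball (a - CARD('n) / 2) (b - CARD('n) / 2) :: (real^'n) set) \<subseteq> cube_set (S_set a b)"
proof
  fix x :: "real^'n" assume x: "x \<in> asym_ball (a - CARD('n) / 2) (b - CARD('n) / 2)"
  define y :: "real^'n" where "y = (\<chi> i. of_int (round (x$i)))"
  have close: "\<forall>i. \<bar>y$i - x$i\<bar> \<le> 1/2"
    unfolding y_def using of_int_round_abs_le[where 'a=real] by simp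
  have "y \<in> S_set a b"
    using asym_ball_of_coords_close[OF x close]
    by (simp add: S_set_eq_lattice_points_asym_ball y_def)
  moreover have "x \<in> unit_cube y"
    using close by (simp add: mem_unit_cube abs_minus_commute)
  ultimately show "x \<in> cube_set (S_set a b)"
    by (auto simp: cube_set_eq_Union_unit_cube)
qed

lemma std_simplex_cart:
  "convex hull (insert 0 Basis) = {p :: real^'n. (\<forall>k. 0 \<le> p$k) \<and> (\<Sum>k\<in>UNIV. p$k) \<le> 1}"
proof -
  have Basis: "(Basis :: (real^'n) set) = range (\<lambda>k. axis k 1)"
    by (auto simp: Basis_vec_def)
  have "(\<Sum>i\<in>Basis. p \<bullet> i) = (\<Sum>k\<in>UNIV. p$k)" for p :: "real^'n"
    unfolding Basis by (subst sum.reindex) (auto simp: inj_on_def axis_eq_axis inner_axis)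
  then show ?thesis
    unfolding std_simplex by (auto simp: Basis inner_axis)
qed

lemma pos_mass_diff_le:
  assumes "\<forall>k. 0 \<le> p$k" "\<forall>k. 0 \<le> q$k"
  shows "pos_mass (p - q) \<le> (\<Sum>k\<in>UNIV. p$k)"
  unfolding pos_mass_def using assms by (intro sum_mono) auto

lemma scaled_simplex_diff_in_asym_ball:
  assumes "p \<in> convex hull (insert 0 Basis)" "q \<in> convex hull (insert 0 Basis)" "0 \<le> a" "0 \<le> b"
  shows "a *\<^sub>R p - b *\<^sub>R q \<in> asym_ball a b"
proof -
  have bound: "pos_mass (c *\<^sub>R u - d *\<^sub>R w) \<le> c"
    if "u \<in> convex hull (insert 0 Basis)" "w \<in> convex hull (insert 0 Basis)" "0 \<le> c" "0 \<le> d"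
    for u w :: "real^'n" and c d :: real
  proof -
    have "pos_mass (c *\<^sub>R u - d *\<^sub>R w) \<le> (\<Sum>k\<in>UNIV. c * u$k)"
      using that pos_mass_diff_le[of "c *\<^sub>R u" "d *\<^sub>R w"] by (simp add: std_simplex_cart)
    also have "\<dots> \<le> c"
      using that mult_left_mono[of "\<Sum>k\<in>UNIV. u$k" 1 c] by (simp add: std_simplex_cart sum_distrib_left)
    finally show ?thesis .
  qed
  from bound[OF assms] bound[OF assms(2,1,4,3)] show ?thesis
    by (simp add: asym_ball_def)
qed

lemma conv_set_S_set: "conv_set (S_set (real a) (real b) :: (real^'n) set) = asym_ball a b"
proof
  show "conv_set (S_set (real a) (real b)) \<subseteq> (asym_ball a b :: (real^'n) set)"
    unfolding conv_set_def S_set_eq_lattice_points_asym_ball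
    by (intro hull_minimal convex_asym_ball) auto
next
  let ?\<Delta> = "convex hull (insert 0 Basis) :: (real^'n) set"
  let ?corners = "(*\<^sub>R) (real a) ` insert 0 Basis + (*\<^sub>R) (- real b) ` insert (0 :: real^'n) Basis"
  have "?corners \<subseteq> S_set (real a) (real b)"
  proof
    fix z assume "z \<in> ?corners"
    then obtain e e' where e: "e \<in> insert 0 Basis" "e' \<in> insert 0 Basis"
      and "z = real a *\<^sub>R e + (- real b) *\<^sub>R e'"
      by (blast elim: set_plus_elim)
    then have z: "z = real a *\<^sub>R e - real b *\<^sub>R e'"
      by simp
    have "z \<in> asym_ball a b"
      unfolding z using e by (intro scaled_simplex_diff_in_asym_ball hull_inc) auto
    moreover have "e$k \<in> \<int>" "e'$k \<in> \<int>" for k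
      using e by (auto simp: Basis_vec_def axis_def)
    ultimately show "z \<in> S_set (real a) (real b)"
      by (simp add: S_set_eq_lattice_points_asym_ball z)
  qed
  then have "(*\<^sub>R) (real a) ` ?\<Delta> + (*\<^sub>R) (- real b) ` ?\<Delta> \<subseteq> conv_set (S_set (real a) (real b))"
    unfolding conv_set_def convex_hull_scaling[symmetric] convex_hull_set_plus[symmetric] by (rule hull_mono)
  moreover have "asym_ball a b \<subseteq> (*\<^sub>R) (real a) ` ?\<Delta> + (*\<^sub>R) (- real b) ` ?\<Delta>"
  proof
    fix x :: "real^'n" assume x: "x \<in> asym_ball a b"
    define p :: "real^'n" where "p = (\<chi> k. max (x$k) 0 / real a)"
    define q :: "real^'n" where "q = (\<chi> k. max (- x$k) 0 / real b)"
    \<comment> \<open>for \<open>a = 0\<close> the division yields \<open>p = 0\<close>, which is right because then \<open>x\<close> has no positive part\<close>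
    have "real a * p$k = max (x$k) 0" "real b * q$k = max (- x$k) 0" for k
      using x max_coord_le_pos_mass[of x k] max_coord_le_pos_mass[of "- x" k]
      by (auto simp: p_def q_def asym_ball_def)
    then have "x = real a *\<^sub>R p + (- real b) *\<^sub>R q"
      by (auto simp: vec_eq_iff max_def)
    moreover have "p \<in> ?\<Delta>" "q \<in> ?\<Delta>"
      using x by (auto simp: std_simplex_cart p_def q_def asym_ball_def pos_mass_def sum_divide_distrib[symmetric] divide_le_eq_1)
    ultimately show "x \<in> (*\<^sub>R) (real a) ` ?\<Delta> + (*\<^sub>R) (- real b) ` ?\<Delta>"
      by (simp only:) (intro set_plus_intro imageI)
  qed
  ultimately show "asym_ball a b \<subseteq> conv_set (S_set (real a) (real b) :: (real^'n) set)"
    by blast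
qed

section \<open>Volumes\<close>

lemma
  shows finite_S_ball: "finite (S_ball r :: (real^'n) set)"
    and card_S_ball: "card (S_ball r :: (real^'n) set) =
      (\<Sum>j\<le>CARD('n). (CARD('n) choose j) * (r choose j) * ((r + (CARD('n) - j)) choose (CARD('n) - j)))"
  using finite_and_card_S_set[of r r, where 'n='n] by (simp_all add: S_ball_def)

lemma
  shows lmeasurable_cube_set_S_ball: "cube_set (S_ball r :: (real^'n) set) \<in> lmeasurable"
    and measure_cube_set_S_ball: "measure lebesgue (cube_set (S_ball r :: (real^'n) set)) = card (S_ball r :: (real^'n) set)"
proof -
  have "\<forall>y\<in>S_ball r :: (real^'n) set. \<forall>i. y$i \<in> \<int>"
    by (simp add: S_ball_def S_set_def)
  then show "cube_set (S_ball r :: (real^'n) set) \<in> lmeasurable"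
    and "measure lebesgue (cube_set (S_ball r :: (real^'n) set)) = card (S_ball r :: (real^'n) set)"
    using lmeasurable_cube_set[OF finite_S_ball] measure_cube_set[OF finite_S_ball] by auto
qed

lemma card_S_ball_bounds:
  fixes r :: nat
  defines "V \<equiv> measure lebesgue (asym_ball 1 1 :: (real^'n) set)"
  assumes "CARD('n) \<le> 2 * r"
  shows "(real r - CARD('n) / 2) ^ CARD('n) * V \<le> card (S_ball r :: (real^'n) set)"
    and "card (S_ball r :: (real^'n) set) \<le> (real r + CARD('n) / 2) ^ CARD('n) * V"
proof -
  have "(real r - CARD('n) / 2) ^ CARD('n) * V = measure lebesgue (asym_ball (real r - CARD('n) / 2) (real r - CARD('n) / 2) :: (real^'n) set)"
    unfolding V_def using assms by (intro measure_asym_ball_scale[symmetric]) simp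
  also have "\<dots> \<le> measure lebesgue (cube_set (S_ball r :: (real^'n) set))"
    using asym_ball_subset_cube_set_S_set lmeasurable_cube_set_S_ball[of r]
    by (intro measure_mono_fmeasurable) (auto simp: S_ball_def intro: fmeasurableD lmeasurable_asym_ball)
  finally show "(real r - CARD('n) / 2) ^ CARD('n) * V \<le> card (S_ball r :: (real^'n) set)"
    by (simp add: measure_cube_set_S_ball)
  have "measure lebesgue (cube_set (S_ball r :: (real^'n) set)) \<le> measure lebesgue (asym_ball (real r + CARD('n) / 2) (real r + CARD('n) / 2) :: (real^'n) set)"
    using cube_set_S_set_subset_asym_ball lmeasurable_cube_set_S_ball[of r]
    by (intro measure_mono_fmeasurable) (auto simp: S_ball_def intro: fmeasurableD lmeasurable_asym_ball)
  also have "\<dots> = (real r + CARD('n) / 2) ^ CARD('n) * V"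
    unfolding V_def by (intro measure_asym_ball_scale) simp
  finally show "card (S_ball r :: (real^'n) set) \<le> (real r + CARD('n) / 2) ^ CARD('n) * V"
    by (simp add: measure_cube_set_S_ball)
qed

lemma tendsto_binomial_over_power:
  "(\<lambda>r::nat. real ((r + c) choose k) / real r ^ k) \<longlonglongrightarrow> 1 / fact k"
proof -
  let ?g = "\<lambda>r::nat. (\<Prod>i<k. 1 + (real c - real i) * (1 / real r)) / fact k"
  have "?g \<longlonglongrightarrow> (\<Prod>i<k. 1 + (real c - real i) * 0) / fact k"
    by (intro tendsto_divide tendsto_prod tendsto_add tendsto_mult tendsto_const lim_1_over_n) simp_all
  moreover have "\<forall>\<^sub>F r in sequentially. ?g r = real ((r + c) choose k) / real r ^ k"
    using eventually_gt_at_top[of "0::nat"]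
  proof eventually_elim
    case (elim r)
    have "real ((r + c) choose k) / real r ^ k = (\<Prod>i<k. real (r + c) - real i) / fact k / (\<Prod>i<k. real r)"
      by (simp add: binomial_gbinomial gbinomial_prod_rev atLeast0LessThan)
    also have "\<dots> = (\<Prod>i<k. (real (r + c) - real i) / real r) / fact k"
      by (simp add: prod_dividef)
    also have "\<dots> = ?g r"
      using elim by (intro arg_cong[where f="\<lambda>x. x / fact k"] prod.cong refl) (simp add: field_simps)
    finally show ?case ..
  qed
  ultimately show ?thesis
    by (simp add: Lim_transform_eventually)
qed

lemma sum_binomial_over_fact_products:
  "(\<Sum>j\<le>m. real (m choose j) * (1 / fact j) * (1 / fact (m - j))) = real ((2 * m) choose m) / fact m"
proof -
  have "real (m choose j) * (1 / fact j) * (1 / fact (m - j)) = real ((m choose j) ^ 2) / fact m" if "j \<le> m" for j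
    using binomial_fact[OF that, where 'a=real] by (simp add: power2_eq_square field_simps)
  then have "(\<Sum>j\<le>m. real (m choose j) * (1 / fact j) * (1 / fact (m - j))) = real (\<Sum>j\<le>m. (m choose j) ^ 2) / fact m"
    by (simp add: sum_divide_distrib)
  then show ?thesis
    by (simp only: choose_square_sum)
qed

lemma tendsto_card_S_ball_over_power:
  "(\<lambda>r. card (S_ball r :: (real^'n) set) / real r ^ CARD('n))
     \<longlonglongrightarrow> real ((2 * CARD('n)) choose CARD('n)) / fact CARD('n)"
proof -
  let ?m = "CARD('n)"
  let ?g = "\<lambda>r::nat. \<Sum>j\<le>?m. real (?m choose j) * (real ((r + 0) choose j) / real r ^ j) *
                 (real ((r + (?m - j)) choose (?m - j)) / real r ^ (?m - j))"
  have "?g \<longlonglongrightarrow> (\<Sum>j\<le>?m. real (?m choose j) * (1 / fact j) * (1 / fact (?m - j)))"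
    by (intro tendsto_sum tendsto_mult tendsto_const tendsto_binomial_over_power)
  then have "?g \<longlonglongrightarrow> real ((2 * ?m) choose ?m) / fact ?m"
    by (simp only: sum_binomial_over_fact_products)
  moreover have "\<forall>\<^sub>F r in sequentially. ?g r = card (S_ball r :: (real^'n) set) / real r ^ ?m"
    using eventually_gt_at_top[of "0::nat"]
  proof eventually_elim
    case (elim r)
    have "real r ^ ?m = real r ^ j * real r ^ (?m - j)" if "j \<le> ?m" for j
      using that by (simp flip: power_add)
    then show ?case
      using elim by (simp add: card_S_ball sum_divide_distrib)
  qed
  ultimately show ?thesis
    by (rule Lim_transform_eventually)
qed

lemma tendsto_card_S_ball_over_power_measure:
  "(\<lambda>r. card (S_ball r :: (real^'n) set) / real r ^ CARD('n)) \<longlonglongrightarrow> measure lebesgue (asym_ball 1 1 :: (real^'n) set)"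
proof -
  let ?m = "CARD('n)"
  let ?V = "measure lebesgue (asym_ball 1 1 :: (real^'n) set)"
  let ?bound = "\<lambda>c r::nat. (1 + c * (1 / real r)) ^ ?m * ?V"
  have bound_lim: "?bound s \<longlonglongrightarrow> ?V" for s
  proof -
    have "?bound s \<longlonglongrightarrow> (1 + s * 0) ^ ?m * ?V"
      by (intro tendsto_intros lim_1_over_n)
    then show ?thesis
      by simp
  qed
  have "\<forall>\<^sub>F r in sequentially. ?bound (- ?m / 2) r \<le> card (S_ball r :: (real^'n) set) / real r ^ ?m
      \<and> card (S_ball r :: (real^'n) set) / real r ^ ?m \<le> ?bound (?m / 2) r"
    using eventually_ge_at_top[of ?m]
  proof eventually_elim
    case (elim r)
    then have "0 < r"
      using zero_less_card_finite[where 'a='n] by linarith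
    then have base: "1 + c * (1 / real r) = (real r + c) / real r" for c
      by (simp add: field_simps)
    have bound: "?bound c r = (real r + c) ^ ?m * ?V / real r ^ ?m" for c
      unfolding base by (simp only: power_divide times_divide_eq_left)
    have lower: "(real r + - ?m / 2) ^ ?m * ?V \<le> card (S_ball r :: (real^'n) set)"
      and upper: "card (S_ball r :: (real^'n) set) \<le> (real r + ?m / 2) ^ ?m * ?V"
      using card_S_ball_bounds[of r, where 'n='n] elim by simp_all
    show ?case
    proof
      have "?bound (- ?m / 2) r = (real r + - ?m / 2) ^ ?m * ?V / real r ^ ?m"
        by (rule bound)
      also have "\<dots> \<le> card (S_ball r :: (real^'n) set) / real r ^ ?m"
        by (rule divide_right_mono[OF lower]) simp
      finally show "?bound (- ?m / 2) r \<le> card (S_ball r :: (real^'n) set) / real r ^ ?m" .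
      have "card (S_ball r :: (real^'n) set) / real r ^ ?m \<le> (real r + ?m / 2) ^ ?m * ?V / real r ^ ?m"
        by (rule divide_right_mono[OF upper]) simp
      also have "\<dots> = ?bound (?m / 2) r"
        by (rule bound[symmetric])
      finally show "card (S_ball r :: (real^'n) set) / real r ^ ?m \<le> ?bound (?m / 2) r" .
    qed
  qed
  then show ?thesis
    unfolding eventually_conj_iff by (elim conjE real_tendsto_sandwich[OF _ _ bound_lim bound_lim])
qed

lemma measure_asym_ball_1_1:
  "measure lebesgue (asym_ball 1 1 :: (real^'n) set) = real ((2 * CARD('n)) choose CARD('n)) / fact CARD('n)"
  using tendsto_card_S_ball_over_power_measure tendsto_card_S_ball_over_power by (rule LIMSEQ_unique)

lemma measure_conv_set_S_ball:
  "measure lebesgue (conv_set (S_ball r :: (real^'n) set)) =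
     real r ^ CARD('n) * (real ((2 * CARD('n)) choose CARD('n)) / fact CARD('n))"
  by (simp add: S_ball_def conv_set_S_set measure_asym_ball_scale measure_asym_ball_1_1)

theorem mainTheorem10:
  shows "(\<forall>r::nat.
      measure lebesgue (cube_set (S_ball r :: (real^'n) set)) =
        real (\<Sum>j=0..min CARD('n) r. (CARD('n) choose j) * (r choose j) * ((r + CARD('n) - j) choose (CARD('n) - j)))
    \<and> measure lebesgue (conv_set (S_ball r :: (real^'n) set)) =
        real r ^ CARD('n) / fact CARD('n) * real ((2 * CARD('n)) choose CARD('n)))
    \<and> ((\<lambda>r::nat. measure lebesgue (conv_set (S_ball r :: (real^'n) set)) /
                  measure lebesgue (cube_set (S_ball r :: (real^'n) set))) \<longlonglongrightarrow> 1)"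
proof (intro conjI allI)
  let ?m = "CARD('n)"
  fix r :: nat
  have "card (S_ball r :: (real^'n) set) =
      (\<Sum>j=0..min ?m r. (?m choose j) * (r choose j) * ((r + ?m - j) choose (?m - j)))"
    unfolding card_S_ball by (rule sum.mono_neutral_cong_right) auto
  then show "measure lebesgue (cube_set (S_ball r :: (real^'n) set)) =
      real (\<Sum>j=0..min ?m r. (?m choose j) * (r choose j) * ((r + ?m - j) choose (?m - j)))"
    by (simp add: measure_cube_set_S_ball)
  show "measure lebesgue (conv_set (S_ball r :: (real^'n) set)) = real r ^ ?m / fact ?m * real ((2 * ?m) choose ?m)"
    by (simp add: measure_conv_set_S_ball)
next
  let ?m = "CARD('n)"
  let ?L = "real ((2 * ?m) choose ?m) / fact ?m"
  have "(\<lambda>r. ?L / (card (S_ball r :: (real^'n) set) / real r ^ ?m)) \<longlonglongrightarrow> ?L / ?L"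
    by (intro tendsto_divide tendsto_const tendsto_card_S_ball_over_power) simp
  moreover have "\<forall>\<^sub>F r in sequentially. ?L / (card (S_ball r :: (real^'n) set) / real r ^ ?m) =
      measure lebesgue (conv_set (S_ball r :: (real^'n) set)) / measure lebesgue (cube_set (S_ball r :: (real^'n) set))"
    using eventually_gt_at_top[of "0::nat"]
    by eventually_elim (simp add: measure_conv_set_S_ball measure_cube_set_S_ball)
  ultimately show "(\<lambda>r. measure lebesgue (conv_set (S_ball r :: (real^'n) set)) /
      measure lebesgue (cube_set (S_ball r :: (real^'n) set))) \<longlonglongrightarrow> 1"
    by (simp add: Lim_transform_eventually)
qed

end
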